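(* For $i\in\{1,2\}$ let $(\mathcal B_{i,\mathbb R},\mathcal S_i,e_i,m_i)$ be as in the context with the same constant $\kappa$. Let $A\in L(\mathcal B_{1,\mathbb R},\mathcal B_{2,\mathbb R})$ with $A(\mathcal C_{1,\mathbb R})\subset\mathcal C_{2,\mathbb R}$ and $\Delta_{\mathbb R}:=\operatorname{diam}_{d_H}(A(\mathcal C_{1,\mathbb R}))<\infty$, and extend $A$ complex-linearly to $\mathcal B_{1,\mathbb C}\to\mathcal B_{2,\mathbb C}$. Then \[\Delta_{\mathbb C}:=\operatorname{diam}_{\delta_{\mathcal C_{2,\mathbb C}}}(A(\mathcal C_{1,\mathbb C}))\le8\Delta_{\mathbb R}+2\ln[3\sqrt2\kappa^{-2}].\]
   Context: Cone setting. $V$ is a real topological vector space, $\mathcal S\subset V'$ a set of linear functionals such that $\ell(x)=0$ for all $\ell\in\mathcal S$ implies $x=0$, $C_{\mathbb R}=\{h\in V\setminus\{0\}:\ell(h)\ge0\ \forall\ell\in\mathcal S\}$, and $e\in C_{\mathbb R}$ such that for every $h\in V$ some $\lambda\ge0$ has $\lambda e-h\in C_{\mathbb R}$. Norm $\|h\|=\inf\{\lambda\ge0:\ell(\lambda e\pm h)\ge0\ \forall\ell\in\mathcal S\}$; $\mathcal B_{\mathbb R}$ the completion; $\mathcal C_{\mathbb R}=\{h\in\mathcal B_{\mathbb R}\setminus\{0\}:\ell(h)\ge0\ \forall\ell\in\mathcal S\}$. $\mathcal S_*$ is the weak-$*$ closure of the convex hull of $\{\lambda\ell:\lambda>0,\ell\in\mathcal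 S\}$; there are $m\in\mathcal S_*$, $\kappa\in(0,1)$ with $m(e)=1$ and $m(h)\ge\kappa\|h\|$ on $\mathcal C_{\mathbb R}$. Hilbert metric on $\mathcal C_{\mathbb R}$: $d_H(h,g)=\ln(\beta/\alpha)$, $\alpha=\sup\{\lambda>0:g-\lambda h\in\mathcal C_{\mathbb R}\}$, $\beta=\inf\{\mu>0:\mu h-g\in\mathcal C_{\mathbb R}\}$. $\mathcal B_{\mathbb C}$ is the complexification (norm $\sup_\theta(\|\Re(e^{i\theta}(x+iy))\|^2+\|\Im(e^{i\theta}(x+iy))\|^2)^{1/2}$), real functionals extended complex-linearly. $\mathcal C_{\mathbb C}=\{z(x+iy):z\ne0,x,y\in\mathcal C_{\mathbb R}\}$, $\mathcal C'_{\mathbb C}=\{\ell\in\mathcal B'_{\mathbb C}:\ell(h)\ne0\ \forall h\in\mathcal C_{\mathbb C}\}$, $E(h,g)=\{\ell(h)/\ell(g):\ell\in\mathcal C'_{\mathbb C}\}$, $\delta_{\mathcal C}(h,g)=\ln\frac{\sup_{E(h,g)}|z|}{\inf_{E(h,g)}|z|}$; diameters in $\mathcal C_{\mathbb C}$ are w.r.t. $\delta_{\mathcal C}$. Objects of the $i$-th space carry index $i$. *)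

theory Defs
  imports "HOL-Analysis.Analysis"
begin

text \<open>The completion B_R is modelled as a Banach space type 'a
in which the original space V sits as a dense linear subspace; functionals of S are
their (unique) continuous extensions to B_R.\<close>

definition real_cone :: "('a::real_normed_vector \<Rightarrow> real) set \<Rightarrow> 'a set" where
  "real_cone S = {h. h \<noteq> 0 \<and> (\<forall>l\<in>S. 0 \<le> l h)}"

text \<open>Convex hull of the positive multiples of S: finite positive combinations.\<close>
definition pos_hull :: "('a \<Rightarrow> real) set \<Rightarrow> ('a \<Rightarrow> real) set" where
  "pos_hull S = {(\<lambda>x. \<Sum>i<n. c i * l i x) | (n::nat) c l. 0 < n \<and> (\<forall>i<n. 0 < c i \<and> l i \<in> S)}"

text \<open>Weak-* closure (pointwise convergence on V).\<close>
definition weak_star_closure :: "'a set \<Rightarrow> ('a \<Rightarrow> real) set \<Rightarrow> ('a \<Rightarrow> real) set" where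
  "weak_star_closure V T = {m. \<forall>F. finite F \<and> F \<subseteq> V \<longrightarrow>
      (\<forall>\<epsilon>>0. \<exists>f\<in>T. \<forall>x\<in>F. \<bar>f x - m x\<bar> < \<epsilon>)}"

definition cone_setting ::
  "'a::banach set \<Rightarrow> ('a \<Rightarrow> real) set \<Rightarrow> 'a \<Rightarrow> ('a \<Rightarrow> real) \<Rightarrow> real \<Rightarrow> bool" where
  "cone_setting V S e m \<kappa> \<longleftrightarrow>
     subspace V \<and> closure V = UNIV \<and>
     (\<forall>l\<in>S. bounded_linear l) \<and>
     (\<forall>x\<in>V. (\<forall>l\<in>S. l x = 0) \<longrightarrow> x = 0) \<and>
     e \<in> V \<and> e \<in> real_cone S \<and>
     (\<forall>h\<in>V. \<exists>t\<ge>0. t *\<^sub>R e - h \<in> real_cone S) \<and>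
     (\<forall>h\<in>V. norm h = Inf {t. 0 \<le> t \<and> (\<forall>l\<in>S. 0 \<le> l (t *\<^sub>R e + h) \<and> 0 \<le> l (t *\<^sub>R e - h))}) \<and>
     bounded_linear m \<and> m \<in> weak_star_closure V (pos_hull S) \<and> m e = 1 \<and>
     0 < \<kappa> \<and> \<kappa> < 1 \<and>
     (\<forall>h\<in>real_cone S. \<kappa> * norm h \<le> m h)"

definition eln :: "ereal \<Rightarrow> ereal" where
  "eln x = (if x = \<infinity> then \<infinity> else if x \<le> 0 then -\<infinity> else ereal (ln (real_of_ereal x)))"

definition hilbert_dist :: "('a::real_normed_vector \<Rightarrow> real) set \<Rightarrow> 'a \<Rightarrow> 'a \<Rightarrow> ereal" where
  "hilbert_dist S h g =
     (let \<alpha> = (SUP t\<in>{t::real. 0 < t \<and> g - t *\<^sub>R h \<in> real_cone S}. ereal t);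
          \<beta> = (INF t\<in>{t::real. 0 < t \<and> t *\<^sub>R h - g \<in> real_cone S}. ereal t)
      in eln \<beta> - eln \<alpha>)"

text \<open>Complexification: x + iy is represented by the pair (x,y).\<close>
definition cmul :: "complex \<Rightarrow> 'a::real_vector \<times> 'a \<Rightarrow> 'a \<times> 'a" where
  "cmul z u = (Re z *\<^sub>R fst u - Im z *\<^sub>R snd u, Im z *\<^sub>R fst u + Re z *\<^sub>R snd u)"

definition cnorm :: "'a::real_normed_vector \<times> 'a \<Rightarrow> real" where
  "cnorm u = (SUP \<theta>::real. sqrt ((norm (fst (cmul (cis \<theta>) u)))\<^sup>2 + (norm (snd (cmul (cis \<theta>) u)))\<^sup>2))"

definition cext :: "('a \<Rightarrow> 'b) \<Rightarrow> 'a \<times> 'a \<Rightarrow> 'b \<times> 'b" where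
  "cext A u = (A (fst u), A (snd u))"

definition cplx_cone :: "('a::real_normed_vector \<Rightarrow> real) set \<Rightarrow> ('a \<times> 'a) set" where
  "cplx_cone S = {cmul z (x, y) | z x y. z \<noteq> 0 \<and> x \<in> real_cone S \<and> y \<in> real_cone S}"

definition cbounded_linear :: "('a::real_normed_vector \<times> 'a \<Rightarrow> complex) \<Rightarrow> bool" where
  "cbounded_linear L \<longleftrightarrow>
     (\<forall>u v. L (fst u + fst v, snd u + snd v) = L u + L v) \<and>
     (\<forall>c u. L (cmul c u) = c * L u) \<and>
     (\<exists>K. \<forall>u. cmod (L u) \<le> K * cnorm u)"

definition cplx_cone_dual :: "('a::real_normed_vector \<Rightarrow> real) set \<Rightarrow> ('a \<times> 'a \<Rightarrow> complex) set" where
  "cplx_cone_dual S = {L. cbounded_linear L \<and> (\<forall>h\<in>cplx_cone S. L h \<noteq> 0)}"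

definition E_set :: "('a::real_normed_vector \<Rightarrow> real) set \<Rightarrow> 'a \<times> 'a \<Rightarrow> 'a \<times> 'a \<Rightarrow> complex set" where
  "E_set S h g = {L h / L g | L. L \<in> cplx_cone_dual S}"

definition cone_gauge :: "('a::real_normed_vector \<Rightarrow> real) set \<Rightarrow> 'a \<times> 'a \<Rightarrow> 'a \<times> 'a \<Rightarrow> ereal" where
  "cone_gauge S h g =
     eln (SUP z\<in>E_set S h g. ereal (cmod z)) - eln (INF z\<in>E_set S h g. ereal (cmod z))"

definition ediam :: "('p \<Rightarrow> 'p \<Rightarrow> ereal) \<Rightarrow> 'p set \<Rightarrow> ereal" where
  "ediam d X = (SUP h\<in>X. SUP g\<in>X. d h g)"

end

theory Submission
  imports Defs
begin

(*
  Fix x0 in A(C1). A bound Delta on the Hilbert diameter puts every x in A(C1) into an order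
  interval [t x0, rho t x0] with rho = exp Delta / kappa; any rho > exp Delta would do.

  For L in the dual of the complex cone, p |-> L (p, 0) is real-linear and maps the closed
  real cone onto a convex cone W in the complex plane that is pointed and meets -i W only in 0,
  because L (x, y) = L (x, 0) + i L (y, 0) does not vanish on the complex cone. Any two
  elements of such a cone make an angle of at most pi/2, so after normalising and rotating it
  lies in the sector |Im w| <= Re w. In that sector the order intervals give
    c (t + s) / (3 sqrt 2 rho) <= |L (x, y)| <= c rho (t + s)
  with c independent of x and y. Hence all ratios L h / L g lie in an annulus whose radii
  have ratio (3 sqrt 2 rho^2)^2, and the gauge is at most 2 ln (3 sqrt 2 rho^2)
  = 4 Delta + 2 ln (3 sqrt 2 / kappa^2).
*)

lemma eln_ereal: "0 < x \<Longrightarrow> eln (ereal x) = ereal (ln x)"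
  by (simp add: eln_def)

lemma eln_SUP_minus_eln_INF_le:
  fixes f :: "'a \<Rightarrow> real"
  assumes "0 < a" and bounds: "\<And>x. x \<in> E \<Longrightarrow> a \<le> f x \<and> f x \<le> b"
  shows "eln (SUP x\<in>E. ereal (f x)) - eln (INF x\<in>E. ereal (f x)) \<le> ereal (ln (b / a))"
proof (cases "E = {}")
  case True
  then show ?thesis
    by (simp add: eln_def bot_ereal_def top_ereal_def)
next
  case False
  then obtain x0 where "x0 \<in> E"
    by blast
  have "(SUP x\<in>E. ereal (f x)) \<le> ereal b" "ereal a \<le> (INF x\<in>E. ereal (f x))"
    using bounds by (auto intro!: SUP_least INF_greatest)
  moreover have "ereal a \<le> (SUP x\<in>E. ereal (f x))" "(INF x\<in>E. ereal (f x)) \<le> ereal b"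
    using bounds[OF \<open>x0 \<in> E\<close>] \<open>x0 \<in> E\<close> by (auto intro: SUP_upper2 INF_lower2)
  ultimately obtain s i where si: "(SUP x\<in>E. ereal (f x)) = ereal s"
    "(INF x\<in>E. ereal (f x)) = ereal i" "a \<le> i" "s \<le> b" "a \<le> s"
    by (cases "SUP x\<in>E. ereal (f x)"; cases "INF x\<in>E. ereal (f x)") auto
  have "ln s - ln i \<le> ln b - ln a"
    using si \<open>0 < a\<close> by (intro diff_mono) auto
  also have "\<dots> = ln (b / a)"
    using si \<open>0 < a\<close> by (simp add: ln_div)
  finally show ?thesis
    using si \<open>0 < a\<close> by (simp add: eln_ereal)
qed

lemma quotient_bounds:
  fixes p q :: real
  assumes "0 < a" "a \<le> p" "p \<le> a'" "0 < b" "b \<le> q" "q \<le> b'"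
  shows "a / b' \<le> p / q" and "p / q \<le> a' / b"
  using assms by (auto intro!: frac_le)

lemma max_ge_sum_div:
  fixes t s \<rho> :: real
  assumes "0 \<le> t" "0 \<le> s" "1 \<le> \<rho>"
  shows "(t + s) / (3 * \<rho>) \<le> max t (s - \<rho> * t)"
proof (cases "t + s \<le> 3 * \<rho> * t")
  case True
  then have "(t + s) / (3 * \<rho>) \<le> t"
    using assms by (simp add: divide_le_eq algebra_simps)
  then show ?thesis
    by simp
next
  case False
  have "t \<le> \<rho> * t"
    using mult_right_mono[OF assms(3,1)] by simp
  with False have "2 * (\<rho> * t) \<le> s"
    by linarith
  moreover have "(t + s) / (3 * \<rho>) \<le> (t + s) / 3"
    using assms by (intro divide_left_mono) auto
  ultimately have "(t + s) / (3 * \<rho>) \<le> s - \<rho> * t"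
    using \<open>t \<le> \<rho> * t\<close> by (simp add: add_divide_distrib)
  then show ?thesis
    by simp
qed

lemma ln_gauge_constant_le:
  fixes \<Delta> \<kappa> :: real
  assumes "0 \<le> \<Delta>" "0 < \<kappa>"
  shows "2 * ln (3 * sqrt 2 * (exp \<Delta> / \<kappa>)\<^sup>2) \<le> 8 * \<Delta> + 2 * ln (3 * sqrt 2 / \<kappa>\<^sup>2)"
proof -
  have "2 * ln (3 * sqrt 2 * (exp \<Delta> / \<kappa>)\<^sup>2) = 4 * \<Delta> + 2 * ln (3 * sqrt 2 / \<kappa>\<^sup>2)"
    using assms(2) by (simp add: ln_mult ln_div power_divide flip: exp_double)
  then show ?thesis
    using assms(1) by simp
qed

lemma le_ediam: "h \<in> X \<Longrightarrow> g \<in> X \<Longrightarrow> d h g \<le> ediam d X"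
  unfolding ediam_def by (blast intro: SUP_upper2)

lemma ediam_le: "(\<And>h g. h \<in> X \<Longrightarrow> g \<in> X \<Longrightarrow> d h g \<le> c) \<Longrightarrow> ediam d X \<le> c"
  unfolding ediam_def by (blast intro: SUP_least)

section \<open>The quarter sector\<close>

definition quarter_sector :: "complex set" where
  "quarter_sector = {w. \<bar>Im w\<bar> \<le> Re w}"

definition sector_interval :: "complex \<Rightarrow> complex \<Rightarrow> complex set" where
  "sector_interval a b = {w. w - a \<in> quarter_sector \<and> b - w \<in> quarter_sector}"

lemma quarter_sector_iff: "w \<in> quarter_sector \<longleftrightarrow> 0 \<le> Re w + Im w \<and> 0 \<le> Re w - Im w"
  by (auto simp: quarter_sector_def abs_le_iff)

lemma quarter_sector_add: "a \<in> quarter_sector \<Longrightarrow> b \<in> quarter_sector \<Longrightarrow> a + b \<in> quarter_sector"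
  by (simp add: quarter_sector_iff)

lemma quarter_sector_scaleR: "a \<in> quarter_sector \<Longrightarrow> 0 \<le> r \<Longrightarrow> r *\<^sub>R a \<in> quarter_sector"
  by (auto simp: quarter_sector_iff simp flip: distrib_left right_diff_distrib)

lemma sector_interval_cnj: "cnj w \<in> sector_interval (cnj a) (cnj b) \<longleftrightarrow> w \<in> sector_interval a b"
  by (simp add: sector_interval_def quarter_sector_def abs_minus_commute)

lemma cis_in_quarter_sector:
  assumes "\<bar>\<phi>\<bar> \<le> pi / 4"
  shows "cis \<phi> \<in> quarter_sector"
proof -
  have "\<bar>sin \<phi>\<bar> = sin \<bar>\<phi>\<bar>"
    using assms sin_ge_zero[of \<phi>] sin_ge_zero[of "- \<phi>"] by (cases "0 \<le> \<phi>") auto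
  also have "\<dots> \<le> sin (pi / 4)"
    using assms by (subst sin_mono_le_eq) auto
  also have "\<dots> = cos (pi / 4)"
    by (simp add: sin_45 cos_45)
  also have "\<dots> \<le> cos \<bar>\<phi>\<bar>"
    using assms by (subst cos_mono_le_eq) auto
  finally show ?thesis
    by (simp add: quarter_sector_def)
qed

text \<open>In the diagonal coordinates \<open>Re w \<pm> Im w\<close> the quarter sector is the positive quadrant.\<close>

lemma cmod_power2_diagonal: "(cmod z)\<^sup>2 = ((Re z + Im z)\<^sup>2 + (Re z - Im z)\<^sup>2) / 2"
  unfolding cmod_power2 by (simp add: power2_sum power2_diff)

lemma abs_Re_plus_Im_le: "\<bar>Re z + Im z\<bar> \<le> sqrt 2 * cmod z"
  by (rule power2_le_imp_le) (simp_all add: power_mult_distrib cmod_power2_diagonal)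

lemma abs_Re_minus_Im_le: "\<bar>Re z - Im z\<bar> \<le> sqrt 2 * cmod z"
  by (rule power2_le_imp_le) (simp_all add: power_mult_distrib cmod_power2_diagonal)

lemma norm_le_in_quarter_sector:
  assumes "a \<in> quarter_sector" "c - a \<in> quarter_sector"
  shows "cmod a \<le> cmod c"
proof -
  have "(Re a + Im a)\<^sup>2 \<le> (Re c + Im c)\<^sup>2" "(Re a - Im a)\<^sup>2 \<le> (Re c - Im c)\<^sup>2"
    using assms by (auto simp: quarter_sector_iff intro!: power_mono)
  then have "(cmod a)\<^sup>2 \<le> (cmod c)\<^sup>2"
    by (simp add: cmod_power2_diagonal)
  then show ?thesis
    by (simp add: power2_le_iff_abs_le)
qed

lemma norm_lower_bound_if_diagonal_ge_1:
  assumes \<omega>: "\<omega> \<in> quarter_sector" "Re \<omega> - Im \<omega> \<le> 1" "1 \<le> Re \<omega> + Im \<omega>"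
    and "0 \<le> t" "0 \<le> s" "1 \<le> \<rho>"
    and "a \<in> sector_interval (t *\<^sub>R \<omega>) ((\<rho> * t) *\<^sub>R \<omega>)"
    and "b \<in> sector_interval (s *\<^sub>R \<omega>) ((\<rho> * s) *\<^sub>R \<omega>)"
  shows "(t + s) / (3 * \<rho>) \<le> sqrt 2 * cmod (a + \<i> * b)"
proof -
  have a: "a - t *\<^sub>R \<omega> \<in> quarter_sector" "(\<rho> * t) *\<^sub>R \<omega> - a \<in> quarter_sector"
    and b: "b - s *\<^sub>R \<omega> \<in> quarter_sector"
    using assms(7,8) by (simp_all add: sector_interval_def)
  have "t * 1 \<le> t * (Re \<omega> + Im \<omega>)"
    using \<omega>(3) \<open>0 \<le> t\<close> by (rule mult_left_mono)
  moreover have "0 \<le> s * (Re \<omega> - Im \<omega>)"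
    using \<omega>(1) \<open>0 \<le> s\<close> by (simp add: quarter_sector_iff)
  ultimately have "t \<le> t * (Re \<omega> + Im \<omega>) + s * (Re \<omega> - Im \<omega>)"
    by simp
  also have "\<dots> \<le> Re (a + \<i> * b) + Im (a + \<i> * b)"
    using a(1) b by (simp add: quarter_sector_iff algebra_simps)
  also have "\<dots> \<le> sqrt 2 * cmod (a + \<i> * b)"
    by (rule abs_le_D1[OF abs_Re_plus_Im_le])
  finally have t: "t \<le> sqrt 2 * cmod (a + \<i> * b)" .
  have "s * 1 \<le> s * (Re \<omega> + Im \<omega>)"
    using \<omega>(3) \<open>0 \<le> s\<close> by (rule mult_left_mono)
  moreover have "(\<rho> * t) * (Re \<omega> - Im \<omega>) \<le> (\<rho> * t) * 1"
    using \<omega>(2) \<open>0 \<le> t\<close> \<open>1 \<le> \<rho>\<close> by (intro mult_left_mono) auto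
  ultimately have "s - \<rho> * t \<le> s * (Re \<omega> + Im \<omega>) - (\<rho> * t) * (Re \<omega> - Im \<omega>)"
    by simp
  also have "\<dots> \<le> Im (a + \<i> * b) - Re (a + \<i> * b)"
    using a(2) b by (simp add: quarter_sector_iff algebra_simps)
  also have "\<dots> \<le> sqrt 2 * cmod (a + \<i> * b)"
    using abs_le_D2[OF abs_Re_minus_Im_le[of "a + \<i> * b"]] by linarith
  finally have "s - \<rho> * t \<le> sqrt 2 * cmod (a + \<i> * b)" .
  with t show ?thesis
    using max_ge_sum_div[OF \<open>0 \<le> t\<close> \<open>0 \<le> s\<close> \<open>1 \<le> \<rho>\<close>] by linarith
qed

lemma unit_quarter_sector_diagonal_cases:
  assumes "\<omega> \<in> quarter_sector" "cmod \<omega> = 1"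
  shows "(Re \<omega> - Im \<omega> \<le> 1 \<and> 1 \<le> Re \<omega> + Im \<omega>) \<or> (Re \<omega> + Im \<omega> \<le> 1 \<and> 1 \<le> Re \<omega> - Im \<omega>)"
proof -
  have diag: "(Re \<omega> + Im \<omega>)\<^sup>2 + (Re \<omega> - Im \<omega>)\<^sup>2 = 2"
    using assms(2) cmod_power2_diagonal[of \<omega>] by simp
  have nonneg: "0 \<le> Re \<omega> + Im \<omega>" "0 \<le> Re \<omega> - Im \<omega>"
    using assms(1) by (simp_all add: quarter_sector_iff)
  show ?thesis
  proof (cases "1 \<le> Re \<omega> + Im \<omega>")
    case True
    then have "(Re \<omega> - Im \<omega>)\<^sup>2 \<le> 1\<^sup>2"
      using diag one_le_power[OF True, of 2] unfolding power_one by linarith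
    then have "Re \<omega> - Im \<omega> \<le> 1"
      by (rule power2_le_imp_le) simp
    with True show ?thesis
      by simp
  next
    case False
    then have "(Re \<omega> + Im \<omega>)\<^sup>2 \<le> 1\<^sup>2"
      using nonneg by (intro power_mono) auto
    then have "1\<^sup>2 \<le> (Re \<omega> - Im \<omega>)\<^sup>2"
      using diag unfolding power_one by linarith
    then have "1 \<le> Re \<omega> - Im \<omega>"
      using nonneg(2) by (rule power2_le_imp_le)
    with False show ?thesis
      by simp
  qed
qed

lemma cmod_cnj_swap: "cmod (cnj b + \<i> * cnj a) = cmod (a + \<i> * b)"
proof -
  have "cmod (cnj b + \<i> * cnj a) = cmod (cnj (- \<i> * (a + \<i> * b)))"
    by (simp add: algebra_simps)
  also have "\<dots> = cmod (a + \<i> * b)"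
    unfolding complex_mod_cnj norm_mult by simp
  finally show ?thesis .
qed

lemma norm_lower_bound_in_quarter_sector:
  assumes \<omega>: "\<omega> \<in> quarter_sector" "cmod \<omega> = 1"
    and "0 \<le> t" "0 \<le> s" "1 \<le> \<rho>"
    and a: "a \<in> sector_interval (t *\<^sub>R \<omega>) ((\<rho> * t) *\<^sub>R \<omega>)"
    and b: "b \<in> sector_interval (s *\<^sub>R \<omega>) ((\<rho> * s) *\<^sub>R \<omega>)"
  shows "(t + s) / (3 * sqrt 2 * \<rho>) \<le> cmod (a + \<i> * b)"
proof -
  have "(t + s) / (3 * \<rho>) \<le> sqrt 2 * cmod (a + \<i> * b)"
    using unit_quarter_sector_diagonal_cases[OF \<omega>]
  proof
    assume "Re \<omega> - Im \<omega> \<le> 1 \<and> 1 \<le> Re \<omega> + Im \<omega>"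
    then show ?thesis
      using norm_lower_bound_if_diagonal_ge_1 assms by blast
  next
    \<comment> \<open>conjugation swaps the diagonal coordinates and reduces this to the first case\<close>
    assume "Re \<omega> + Im \<omega> \<le> 1 \<and> 1 \<le> Re \<omega> - Im \<omega>"
    moreover have "cnj \<omega> \<in> quarter_sector"
      using \<omega>(1) by (simp add: quarter_sector_def)
    ultimately have "(s + t) / (3 * \<rho>) \<le> sqrt 2 * cmod (cnj b + \<i> * cnj a)"
      using assms norm_lower_bound_if_diagonal_ge_1[of "cnj \<omega>" s t \<rho> "cnj b" "cnj a"]
      by (simp add: sector_interval_cnj flip: complex_cnj_scaleR)
    then show ?thesis
      by (simp add: cmod_cnj_swap add.commute)
  qed
  then show ?thesis
    using \<open>1 \<le> \<rho>\<close> by (simp add: field_simps)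
qed

lemma norm_upper_bound_in_quarter_sector:
  assumes \<omega>: "\<omega> \<in> quarter_sector" "cmod \<omega> = 1"
    and "0 \<le> t" "0 \<le> s" "0 \<le> \<rho>"
    and "a \<in> sector_interval (t *\<^sub>R \<omega>) ((\<rho> * t) *\<^sub>R \<omega>)"
    and "b \<in> sector_interval (s *\<^sub>R \<omega>) ((\<rho> * s) *\<^sub>R \<omega>)"
  shows "cmod (a + \<i> * b) \<le> \<rho> * (t + s)"
proof -
  have a: "a - t *\<^sub>R \<omega> \<in> quarter_sector" "(\<rho> * t) *\<^sub>R \<omega> - a \<in> quarter_sector"
    and b: "b - s *\<^sub>R \<omega> \<in> quarter_sector" "(\<rho> * s) *\<^sub>R \<omega> - b \<in> quarter_sector"
    using assms(6,7) by (simp_all add: sector_interval_def)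
  have "a \<in> quarter_sector" "b \<in> quarter_sector"
    using quarter_sector_add[OF a(1) quarter_sector_scaleR[OF \<omega>(1) \<open>0 \<le> t\<close>]]
      quarter_sector_add[OF b(1) quarter_sector_scaleR[OF \<omega>(1) \<open>0 \<le> s\<close>]] by simp_all
  then have "cmod a \<le> cmod ((\<rho> * t) *\<^sub>R \<omega>)" "cmod b \<le> cmod ((\<rho> * s) *\<^sub>R \<omega>)"
    using a(2) b(2) norm_le_in_quarter_sector by blast+
  then have "cmod a \<le> \<rho> * t" "cmod b \<le> \<rho> * s"
    using \<omega>(2) \<open>0 \<le> t\<close> \<open>0 \<le> s\<close> \<open>0 \<le> \<rho>\<close> by simp_all
  then show ?thesis
    using norm_triangle_ineq[of a "\<i> * b"] by (simp add: norm_mult distrib_left)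
qed

section \<open>Convex cones in the complex plane\<close>

lemma cos_nonneg_imp_abs_le:
  fixes x :: real
  assumes "\<bar>x\<bar> \<le> pi" "0 \<le> cos x"
  shows "\<bar>x\<bar> \<le> pi / 2"
proof (rule ccontr)
  assume "\<not> \<bar>x\<bar> \<le> pi / 2"
  then have "0 < cos (pi - \<bar>x\<bar>)"
    using assms by (intro cos_gt_zero_pi) auto
  then show False
    using assms by (simp add: cos_diff)
qed

lemma center_of_narrow_set:
  fixes T :: "real set"
  assumes "T \<noteq> {}" and width: "\<And>x y. x \<in> T \<Longrightarrow> y \<in> T \<Longrightarrow> x - y \<le> d"
  obtains c where "\<And>x. x \<in> T \<Longrightarrow> \<bar>x - c\<bar> \<le> d / 2"
proof
  from assms(1) obtain y0 where "y0 \<in> T"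
    by blast
  then have bdd: "bdd_above T" "bdd_below T"
    using width by (auto intro!: bdd_aboveI[of _ "y0 + d"] bdd_belowI[of _ "y0 - d"] simp: algebra_simps)
  have "x \<le> Inf T + d" if "x \<in> T" for x
    using cInf_greatest[OF assms(1), of "x - d"] width[OF that] by fastforce
  then have "Sup T \<le> Inf T + d"
    using assms(1) by (intro cSup_least) auto
  moreover have "Inf T \<le> x" "x \<le> Sup T" if "x \<in> T" for x
    using bdd that by (auto intro: cInf_lower cSup_upper)
  ultimately show "\<bar>x - (Sup T + Inf T) / 2\<bar> \<le> d / 2" if "x \<in> T" for x
    using that by (fastforce simp: abs_le_iff field_simps)
qed

locale complex_cone =
  fixes W :: "complex set"
  assumes add_closed: "a \<in> W \<Longrightarrow> b \<in> W \<Longrightarrow> a + b \<in> W"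
    and scaleR_closed: "a \<in> W \<Longrightarrow> 0 \<le> r \<Longrightarrow> r *\<^sub>R a \<in> W"
    and pointed: "a \<in> W \<Longrightarrow> - a \<in> W \<Longrightarrow> a = 0"
    and meets_rotation_trivially: "a \<in> W \<Longrightarrow> b \<in> W \<Longrightarrow> a + \<i> * b = 0 \<Longrightarrow> a = 0"
begin

lemma mult_image: "complex_cone ((\<lambda>w. c * w) ` W)"
proof
  fix a b assume "a \<in> (\<lambda>w. c * w) ` W" "b \<in> (\<lambda>w. c * w) ` W"
  then show "a + b \<in> (\<lambda>w. c * w) ` W"
    by (auto simp flip: distrib_left intro: add_closed)
next
  fix a and r :: real assume "a \<in> (\<lambda>w. c * w) ` W" "0 \<le> r"
  then show "r *\<^sub>R a \<in> (\<lambda>w. c * w) ` W"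
    by (auto simp flip: mult_scaleR_right intro: scaleR_closed)
next
  fix a assume "a \<in> (\<lambda>w. c * w) ` W" "- a \<in> (\<lambda>w. c * w) ` W"
  then obtain u v where "u \<in> W" "v \<in> W" "a = c * u" "- a = c * v"
    by blast
  then have "c = 0 \<or> v = - u"
    by (metis mult_minus_right mult_left_cancel)
  then show "a = 0"
    using pointed \<open>u \<in> W\<close> \<open>v \<in> W\<close> \<open>a = c * u\<close> by auto
next
  fix a b assume "a \<in> (\<lambda>w. c * w) ` W" "b \<in> (\<lambda>w. c * w) ` W" "a + \<i> * b = 0"
  then obtain u v where "u \<in> W" "v \<in> W" "a = c * u" "c * (u + \<i> * v) = 0"
    by (auto simp: algebra_simps)
  then show "a = 0"
    using meets_rotation_trivially by auto
qed

lemma obtuse_multiple_eq_0: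
  assumes "w1 \<in> W" "w2 \<in> W" "w1 = q * w2" "Re q < 0" "Im q \<le> 0"
  shows "w1 = 0"
proof -
  have "(- Re q) *\<^sub>R w2 + w1 \<in> W"
    using assms(1,2,4) by (intro add_closed scaleR_closed) auto
  moreover have "(- Im q) *\<^sub>R w2 \<in> W"
    using assms(2,5) by (intro scaleR_closed) auto
  moreover have "((- Re q) *\<^sub>R w2 + w1) + \<i> * ((- Im q) *\<^sub>R w2) = 0"
    using assms(3) by (simp add: complex_eq_iff)
  ultimately have "(- Re q) *\<^sub>R w2 + w1 = 0"
    by (rule meets_rotation_trivially)
  then have "- w1 = (- Re q) *\<^sub>R w2"
    by (metis add.commute neg_eq_iff_add_eq_0)
  have "- w1 \<in> W"
    unfolding \<open>- w1 = _\<close> using assms(2,4) by (intro scaleR_closed) auto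
  then show "w1 = 0"
    using pointed assms(1) by blast
qed

lemma Re_mult_cnj_nonneg:
  assumes "w1 \<in> W" "w2 \<in> W"
  shows "0 \<le> Re (w1 * cnj w2)"
proof (rule ccontr)
  assume neg: "\<not> 0 \<le> Re (w1 * cnj w2)"
  then have "w1 \<noteq> 0" "w2 \<noteq> 0"
    by auto
  define q where "q = w1 / w2"
  have "Re q = Re (w1 * cnj w2) / (cmod w2)\<^sup>2"
    unfolding q_def by (simp add: Re_divide cmod_power2)
  then have "Re q < 0"
    using neg \<open>w2 \<noteq> 0\<close> by (simp add: divide_neg_pos)
  show False
  proof (cases "Im q \<le> 0")
    case True
    have "w1 = q * w2"
      using \<open>w2 \<noteq> 0\<close> by (simp add: q_def)
    then show False
      using obtuse_multiple_eq_0 assms \<open>Re q < 0\<close> True \<open>w1 \<noteq> 0\<close> by blast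
  next
    case False
    have "w2 = inverse q * w1"
      using \<open>w1 \<noteq> 0\<close> \<open>w2 \<noteq> 0\<close> by (simp add: q_def)
    moreover have "0 < (Re q)\<^sup>2 + (Im q)\<^sup>2"
      using \<open>Re q < 0\<close> by (simp add: add_pos_nonneg)
    then have "Re (inverse q) < 0" "Im (inverse q) \<le> 0"
      using \<open>Re q < 0\<close> False by (simp_all add: Re_inverse Im_inverse divide_neg_pos)
    ultimately show False
      using obtuse_multiple_eq_0 assms \<open>w2 \<noteq> 0\<close> by blast
  qed
qed

lemma cos_Arg_diff_nonneg:
  assumes "w1 \<in> W" "w2 \<in> W" "w1 \<noteq> 0" "w2 \<noteq> 0"
  shows "0 \<le> cos (Arg w1 - Arg w2)"
proof -
  have "w1 * cnj w2 = rcis (cmod w1 * cmod w2) (Arg w1 - Arg w2)"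
    by (metis rcis_cmod_Arg rcis_cnj rcis_mult complex_mod_cnj diff_conv_add_uminus)
  then have "0 \<le> cmod w1 * cmod w2 * cos (Arg w1 - Arg w2)"
    using Re_mult_cnj_nonneg[OF assms(1,2)] by simp
  moreover have "0 < cmod w1 * cmod w2"
    using assms(3,4) by simp
  ultimately show ?thesis
    by (simp add: zero_le_mult_iff)
qed

lemma abs_Arg_diff_le:
  assumes "1 \<in> W" "w1 \<in> W" "w2 \<in> W" "w1 \<noteq> 0" "w2 \<noteq> 0"
  shows "\<bar>Arg w1 - Arg w2\<bar> \<le> pi / 2"
proof -
  have Arg_bound: "\<bar>Arg w\<bar> \<le> pi / 2" if "w \<in> W" "w \<noteq> 0" for w
    using cos_Arg_diff_nonneg[of w 1] that assms(1) mpi_less_Arg[of w] Arg_le_pi[of w]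
    by (intro cos_nonneg_imp_abs_le) auto
  have "\<bar>Arg w1 - Arg w2\<bar> \<le> pi"
    using Arg_bound[OF assms(2,4)] Arg_bound[OF assms(3,5)] by (auto simp: abs_le_iff)
  then show ?thesis
    using cos_Arg_diff_nonneg[OF assms(2-5)] by (rule cos_nonneg_imp_abs_le)
qed

lemma rotate_into_quarter_sector:
  assumes "1 \<in> W"
  obtains \<omega> where "cmod \<omega> = 1" "\<And>w. w \<in> W \<Longrightarrow> \<omega> * w \<in> quarter_sector"
proof -
  have width: "x - y \<le> pi / 2" if xy: "x \<in> Arg ` (W - {0})" "y \<in> Arg ` (W - {0})" for x y
  proof -
    obtain w1 w2 where "w1 \<in> W" "w1 \<noteq> 0" "x = Arg w1" "w2 \<in> W" "w2 \<noteq> 0" "y = Arg w2"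
      using xy by blast
    then show ?thesis
      using abs_le_D1[OF abs_Arg_diff_le[OF assms, of w1 w2]] by simp
  qed
  have "Arg ` (W - {0}) \<noteq> {}"
    using assms by (metis Diff_iff empty_iff image_eqI singletonD zero_neq_one)
  then obtain c where c: "\<And>x. x \<in> Arg ` (W - {0}) \<Longrightarrow> \<bar>x - c\<bar> \<le> pi / 2 / 2"
    using width by (rule center_of_narrow_set) auto
  show thesis
  proof
    show "cmod (cis (- c)) = 1"
      by simp
    show "cis (- c) * w \<in> quarter_sector" if "w \<in> W" for w
    proof (cases "w = 0")
      case True
      then show ?thesis
        by (simp add: quarter_sector_def)
    next
      case False
      have "cis (- c) * w = cis (- c) * rcis (cmod w) (Arg w)"
        by (simp only: rcis_cmod_Arg)
      also have "\<dots> = cmod w *\<^sub>R cis (Arg w - c)"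
        by (simp add: rcis_def scaleR_conv_of_real cis_mult mult.left_commute)
      finally show ?thesis
        using c[of "Arg w"] that False by (simp add: quarter_sector_scaleR cis_in_quarter_sector)
    qed
  qed
qed

end

section \<open>Real cones and the Hilbert metric\<close>

definition real_cone0 :: "('a::real_normed_vector \<Rightarrow> real) set \<Rightarrow> 'a set" where
  "real_cone0 S = {h. \<forall>l\<in>S. 0 \<le> l h}"

definition cone_interval :: "('a::real_normed_vector \<Rightarrow> real) set \<Rightarrow> 'a \<Rightarrow> 'a \<Rightarrow> 'a set" where
  "cone_interval S a b = {x. x - a \<in> real_cone0 S \<and> b - x \<in> real_cone0 S}"

lemma real_cone_eq: "real_cone S = real_cone0 S - {0}"
  by (auto simp: real_cone_def real_cone0_def)

locale strictly_positive_functional =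
  fixes S :: "('a::real_normed_vector \<Rightarrow> real) set" and m :: "'a \<Rightarrow> real"
  assumes linear_cone: "l \<in> S \<Longrightarrow> linear l"
    and linear: "linear m"
    and pos: "h \<in> real_cone S \<Longrightarrow> 0 < m h"
begin

lemma real_cone0_add: "x \<in> real_cone0 S \<Longrightarrow> y \<in> real_cone0 S \<Longrightarrow> x + y \<in> real_cone0 S"
  by (simp add: real_cone0_def linear_add[OF linear_cone])

lemma real_cone0_scaleR: "x \<in> real_cone0 S \<Longrightarrow> 0 \<le> r \<Longrightarrow> r *\<^sub>R x \<in> real_cone0 S"
  by (simp add: real_cone0_def linear_cmul[OF linear_cone])

lemma real_cone0_pointed:
  assumes "h \<in> real_cone0 S" "- h \<in> real_cone0 S"
  shows "h = 0"
proof (rule ccontr)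
  assume "h \<noteq> 0"
  then have "0 < m h" "0 < m (- h)"
    using assms by (auto simp: real_cone_eq intro!: pos)
  then show False
    by (simp add: linear_neg[OF linear])
qed

lemma hilbert_SUP_INF_bounds:
  assumes "h \<in> real_cone S" "g \<in> real_cone S"
  shows "(SUP t\<in>{t. 0 < t \<and> g - t *\<^sub>R h \<in> real_cone S}. ereal t) \<le> ereal (m g / m h)"
    and "ereal (m g / m h) \<le> (INF t\<in>{t. 0 < t \<and> t *\<^sub>R h - g \<in> real_cone S}. ereal t)"
proof -
  have "t < m g / m h" if "g - t *\<^sub>R h \<in> real_cone S" for t
    using pos[OF assms(1)] pos[OF that] by (simp add: linear_diff[OF linear] linear_cmul[OF linear] field_simps)
  then show "(SUP t\<in>{t. 0 < t \<and> g - t *\<^sub>R h \<in> real_cone S}. ereal t) \<le> ereal (m g / m h)"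
    by (intro SUP_least) (simp add: less_imp_le)
  have "m g / m h < t" if "t *\<^sub>R h - g \<in> real_cone S" for t
    using pos[OF assms(1)] pos[OF that] by (simp add: linear_diff[OF linear] linear_cmul[OF linear] field_simps)
  then show "ereal (m g / m h) \<le> (INF t\<in>{t. 0 < t \<and> t *\<^sub>R h - g \<in> real_cone S}. ereal t)"
    by (intro INF_greatest) (simp add: less_imp_le)
qed

lemma hilbert_dist_finite:
  assumes "h \<in> real_cone S" "g \<in> real_cone S" "hilbert_dist S h g \<noteq> \<infinity>"
  obtains a b where "0 < a" "a \<le> b" "hilbert_dist S h g = ereal (ln b - ln a)"
    "(SUP t\<in>{t. 0 < t \<and> g - t *\<^sub>R h \<in> real_cone S}. ereal t) = ereal a"
    "(INF t\<in>{t. 0 < t \<and> t *\<^sub>R h - g \<in> real_cone S}. ereal t) = ereal b"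
proof -
  define \<alpha> where "\<alpha> = (SUP t\<in>{t. 0 < t \<and> g - t *\<^sub>R h \<in> real_cone S}. ereal t)"
  define \<beta> where "\<beta> = (INF t\<in>{t. 0 < t \<and> t *\<^sub>R h - g \<in> real_cone S}. ereal t)"
  define c where "c = m g / m h"
  have "0 < c"
    using pos assms by (simp add: c_def)
  have "\<alpha> \<le> ereal c" "ereal c \<le> \<beta>"
    using hilbert_SUP_INF_bounds[OF assms(1,2)] by (simp_all add: \<alpha>_def \<beta>_def c_def)
  have dist: "hilbert_dist S h g = eln \<beta> - eln \<alpha>"
    by (simp add: hilbert_dist_def \<alpha>_def \<beta>_def)
  have "eln \<beta> \<noteq> - \<infinity>"
    using \<open>ereal c \<le> \<beta>\<close> \<open>0 < c\<close> by (cases \<beta>) (auto simp: eln_def)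
  then have "eln \<alpha> \<noteq> - \<infinity>"
    using assms(3) dist by auto
  moreover have "eln \<alpha> = - \<infinity>" if "{t. 0 < t \<and> g - t *\<^sub>R h \<in> real_cone S} = {}"
    unfolding \<alpha>_def that by (simp add: eln_def bot_ereal_def)
  ultimately obtain t0 where "0 < t0" "g - t0 *\<^sub>R h \<in> real_cone S"
    by blast
  then have "0 < t0" "ereal t0 \<le> \<alpha>"
    unfolding \<alpha>_def by (auto intro: SUP_upper)
  with \<open>\<alpha> \<le> ereal c\<close> obtain a where a: "\<alpha> = ereal a" "0 < a" "a \<le> c"
    by (cases \<alpha>) auto
  then have "eln \<beta> \<noteq> \<infinity>"
    using assms(3) dist by (auto simp: eln_ereal)
  then obtain b where b: "\<beta> = ereal b" "c \<le> b"
    using \<open>ereal c \<le> \<beta>\<close> by (cases \<beta>) (auto simp: eln_def)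
  show thesis
  proof
    show "hilbert_dist S h g = ereal (ln b - ln a)"
      using a b \<open>0 < c\<close> by (simp add: dist eln_ereal)
  qed (use a b \<alpha>_def \<beta>_def in auto)
qed

lemma hilbert_dist_nonneg:
  assumes "h \<in> real_cone S" "g \<in> real_cone S"
  shows "0 \<le> hilbert_dist S h g"
proof (cases "hilbert_dist S h g = \<infinity>")
  case False
  then obtain a b where "0 < a" "a \<le> b" "hilbert_dist S h g = ereal (ln b - ln a)"
    using hilbert_dist_finite[OF assms] by blast
  then show ?thesis
    by simp
qed simp

text \<open>The slack \<open>exp \<Delta> < \<rho>\<close> is needed because the supremum and the infimum in the Hilbert
  metric need not be attained.\<close>

lemma hilbert_dist_sandwich:
  assumes "h \<in> real_cone S" "g \<in> real_cone S" "hilbert_dist S h g \<le> ereal \<Delta>" "exp \<Delta> < \<rho>"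
  obtains t where "0 < t" "g \<in> cone_interval S (t *\<^sub>R h) ((\<rho> * t) *\<^sub>R h)"
proof -
  have "hilbert_dist S h g \<noteq> \<infinity>"
    using assms(3) by auto
  then obtain a b where ab: "0 < a" "a \<le> b" "hilbert_dist S h g = ereal (ln b - ln a)"
    and sup: "(SUP t\<in>{t. 0 < t \<and> g - t *\<^sub>R h \<in> real_cone S}. ereal t) = ereal a"
    and inf: "(INF t\<in>{t. 0 < t \<and> t *\<^sub>R h - g \<in> real_cone S}. ereal t) = ereal b"
    by (rule hilbert_dist_finite[OF assms(1,2)])
  have "ln b \<le> ln (exp \<Delta> * a)"
    using ab assms(3) by (simp add: ln_mult)
  then have "b \<le> exp \<Delta> * a"
    using ab by (subst (asm) ln_le_cancel_iff) auto
  define q where "q = sqrt (\<rho> / exp \<Delta>)"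
  have "0 < \<rho>"
    using assms(4) exp_gt_zero[of \<Delta>] by linarith
  then have "1 < q" "q * q = \<rho> / exp \<Delta>"
    using assms(4) by (simp_all add: q_def)
  then have "ereal (a / q) < ereal a" "ereal b < ereal (b * q)"
    using ab by (simp_all add: divide_less_eq)
  then obtain t1 t2 where t1: "0 < t1" "g - t1 *\<^sub>R h \<in> real_cone S" "a / q < t1"
    and t2: "t2 *\<^sub>R h - g \<in> real_cone S" "t2 < b * q"
    unfolding sup[symmetric] inf[symmetric] less_SUP_iff INF_less_iff by auto
  have "t2 < exp \<Delta> * a * q"
    using t2(2) mult_right_mono[OF \<open>b \<le> exp \<Delta> * a\<close>, of q] \<open>1 < q\<close> by linarith
  also have "\<dots> < exp \<Delta> * (q * q) * t1"
    using t1(3) \<open>1 < q\<close> by (simp add: field_simps)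
  also have "\<dots> = \<rho> * t1"
    using \<open>q * q = \<rho> / exp \<Delta>\<close> by simp
  finally have "0 \<le> \<rho> * t1 - t2"
    by simp
  then have "(\<rho> * t1 - t2) *\<^sub>R h + (t2 *\<^sub>R h - g) \<in> real_cone0 S"
    using assms(1) t2(1) by (intro real_cone0_add real_cone0_scaleR) (auto simp: real_cone_eq)
  then show thesis
    using t1 by (intro that[of t1]) (auto simp: cone_interval_def real_cone_eq algebra_simps)
qed

lemma hilbert_ball_sandwich:
  assumes "P \<subseteq> real_cone S" "x0 \<in> real_cone S"
    and "\<And>x. x \<in> P \<Longrightarrow> hilbert_dist S x0 x \<le> ereal \<Delta>" "exp \<Delta> < \<rho>"
  obtains T where "\<And>x. x \<in> P \<Longrightarrow> 0 < T x"
    "\<And>x. x \<in> P \<Longrightarrow> x \<in> cone_interval S (T x *\<^sub>R x0) ((\<rho> * T x) *\<^sub>R x0)"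
proof -
  have "\<forall>x\<in>P. \<exists>t. 0 < t \<and> x \<in> cone_interval S (t *\<^sub>R x0) ((\<rho> * t) *\<^sub>R x0)"
  proof
    fix x assume "x \<in> P"
    then obtain t where "0 < t" "x \<in> cone_interval S (t *\<^sub>R x0) ((\<rho> * t) *\<^sub>R x0)"
      using hilbert_dist_sandwich[OF assms(2) _ assms(3) assms(4)] assms(1) by blast
    then show "\<exists>t. 0 < t \<and> x \<in> cone_interval S (t *\<^sub>R x0) ((\<rho> * t) *\<^sub>R x0)"
      by blast
  qed
  then have "\<exists>T. \<forall>x\<in>P. 0 < T x \<and> x \<in> cone_interval S (T x *\<^sub>R x0) ((\<rho> * T x) *\<^sub>R x0)"
    by (rule bchoice)
  then show thesis
    using that by blast
qed

end

section \<open>Functionals on the complexified cone\<close>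

lemma cext_cplx_coneE:
  assumes "linear A" "h \<in> cext A ` cplx_cone S"
  obtains z x y where "h = cmul z (A x, A y)" "z \<noteq> 0" "x \<in> real_cone S" "y \<in> real_cone S"
  using assms by (auto simp: cplx_cone_def cext_def cmul_def linear_diff linear_add linear_cmul)

lemma
  assumes "L \<in> cplx_cone_dual S"
  shows cplx_cone_dual_cmul: "L (cmul z u) = z * L u"
    and cplx_cone_dual_split: "L (p, q) = L (p, 0) + \<i> * L (q, 0)"
    and cplx_cone_dual_linear: "linear (\<lambda>p. L (p, 0))"
    and cplx_cone_dual_nonzero: "x \<in> real_cone S \<Longrightarrow> y \<in> real_cone S \<Longrightarrow> L (x, y) \<noteq> 0"
proof -
  have add: "L (fst u + fst v, snd u + snd v) = L u + L v" for u v
    using assms by (simp add: cplx_cone_dual_def cbounded_linear_def)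
  show mult: "L (cmul z u) = z * L u" for z u
    using assms by (cases u) (simp add: cplx_cone_dual_def cbounded_linear_def)
  show "L (p, q) = L (p, 0) + \<i> * L (q, 0)"
    using add[of "(p, 0)" "(0, q)"] mult[of \<i> "(q, 0)"] by (simp add: cmul_def)
  show "linear (\<lambda>p. L (p, 0))"
    using add[of "(_, 0)" "(_, 0)"] mult[of "of_real _" "(_, 0)"]
    by (intro linearI) (simp_all add: cmul_def scaleR_conv_of_real)
  assume "x \<in> real_cone S" "y \<in> real_cone S"
  then have "cmul 1 (x, y) \<in> cplx_cone S"
    unfolding cplx_cone_def by (intro CollectI exI[of _ 1] exI[of _ x] exI[of _ y]) simp
  then show "L (x, y) \<noteq> 0"
    using assms by (simp add: cplx_cone_dual_def cmul_def)
qed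

lemma eq_0_if_rotated_sum_eq_0:
  assumes f: "linear f"
    and nonzero: "\<And>x y. x \<in> real_cone S \<Longrightarrow> y \<in> real_cone S \<Longrightarrow> f x + \<i> * f y \<noteq> 0"
    and "p \<in> real_cone0 S" "q \<in> real_cone0 S" "f p + \<i> * f q = 0"
  shows "p = 0"
proof (rule ccontr)
  assume "p \<noteq> 0"
  then have p: "p \<in> real_cone S"
    using assms(3) by (simp add: real_cone_eq)
  show False
  proof (cases "q = 0")
    case True
    then have "f p + \<i> * f p = 0"
      using assms(5) linear_0[OF f] by simp
    then show False
      using nonzero[OF p p] by simp
  next
    case False
    then show False
      using nonzero[OF p, of q] assms(4,5) by (simp add: real_cone_eq)
  qed
qed

context strictly_positive_functional
begin

lemma complex_cone_image:
  assumes f: "linear f"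
    and nonzero: "\<And>x y. x \<in> real_cone S \<Longrightarrow> y \<in> real_cone S \<Longrightarrow> f x + \<i> * f y \<noteq> 0"
  shows "complex_cone (f ` real_cone0 S)"
proof -
  note zero = eq_0_if_rotated_sum_eq_0[OF f nonzero]
  show ?thesis
  proof
    fix a b assume "a \<in> f ` real_cone0 S" "b \<in> f ` real_cone0 S"
    then show "a + b \<in> f ` real_cone0 S"
      by (auto simp flip: linear_add[OF f] intro: real_cone0_add)
  next
    fix a and r :: real assume "a \<in> f ` real_cone0 S" "0 \<le> r"
    then show "r *\<^sub>R a \<in> f ` real_cone0 S"
      by (auto simp flip: linear_cmul[OF f] intro: real_cone0_scaleR)
  next
    fix a assume "a \<in> f ` real_cone0 S" "- a \<in> f ` real_cone0 S"
    then obtain p q where pq: "p \<in> real_cone0 S" "q \<in> real_cone0 S" "a = f p" "- a = f q"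
      by blast
    then have "f (p + q) = a + - a"
      by (simp only: linear_add[OF f])
    then have "f (p + q) + \<i> * f (p + q) = 0"
      by simp
    then have "q = - p"
      using zero[where p = "p + q" and q = "p + q"] pq real_cone0_add by (simp add: eq_neg_iff_add_eq_0 add.commute)
    then show "a = 0"
      using real_cone0_pointed pq linear_0[OF f] by auto
  next
    fix a b assume "a \<in> f ` real_cone0 S" "b \<in> f ` real_cone0 S" "a + \<i> * b = 0"
    then show "a = 0"
      using zero linear_0[OF f] by blast
  qed
qed

lemma cplx_cone_dual_normal_form:
  assumes L: "L \<in> cplx_cone_dual S" and x0: "x0 \<in> real_cone S"
  obtains \<nu> \<mu> where "\<nu> \<noteq> 0" "linear \<mu>" "\<mu> x0 \<in> quarter_sector" "cmod (\<mu> x0) = 1"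
    "\<And>x a b. x \<in> cone_interval S a b \<Longrightarrow> \<mu> x \<in> sector_interval (\<mu> a) (\<mu> b)"
    "\<And>x y. L (x, y) = \<nu> * (\<mu> x + \<i> * \<mu> y)"
proof -
  define f where "f p = L (p, 0)" for p
  have f: "linear f"
    using cplx_cone_dual_linear[OF L] by (simp add: f_def[abs_def])
  have nonzero: "f x + \<i> * f y \<noteq> 0" if "x \<in> real_cone S" "y \<in> real_cone S" for x y
    using cplx_cone_dual_nonzero[OF L that] cplx_cone_dual_split[OF L, of x y] by (simp add: f_def)
  have "f x0 \<noteq> 0"
    using nonzero[OF x0 x0] by auto
  have "x0 \<in> real_cone0 S"
    using x0 by (simp add: real_cone_eq)
  interpret W: complex_cone "(\<lambda>w. inverse (f x0) * w) ` f ` real_cone0 S"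
    by (rule complex_cone.mult_image[OF complex_cone_image[OF f nonzero]])
  have "1 \<in> (\<lambda>w. inverse (f x0) * w) ` f ` real_cone0 S"
    using \<open>x0 \<in> real_cone0 S\<close> \<open>f x0 \<noteq> 0\<close> by (intro image_eqI) auto
  then obtain \<omega> where "cmod \<omega> = 1"
    and sector: "\<And>p. p \<in> real_cone0 S \<Longrightarrow> \<omega> * (inverse (f x0) * f p) \<in> quarter_sector"
    by (rule W.rotate_into_quarter_sector) blast
  define \<mu> where "\<mu> p = \<omega> * (inverse (f x0) * f p)" for p
  have "linear \<mu>"
    using f by (intro linearI) (simp_all add: \<mu>_def linear_add linear_cmul algebra_simps)
  have \<mu>_sector: "\<mu> p \<in> quarter_sector" if "p \<in> real_cone0 S" for p
    using sector[OF that] by (simp only: \<mu>_def)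
  show thesis
  proof
    show "f x0 / \<omega> \<noteq> 0"
      using \<open>f x0 \<noteq> 0\<close> \<open>cmod \<omega> = 1\<close> by auto
    show "linear \<mu>"
      by fact
    show "\<mu> x0 \<in> quarter_sector" "cmod (\<mu> x0) = 1"
      using \<mu>_sector[OF \<open>x0 \<in> real_cone0 S\<close>] \<open>f x0 \<noteq> 0\<close> \<open>cmod \<omega> = 1\<close> by (simp_all add: \<mu>_def)
    show "\<mu> x \<in> sector_interval (\<mu> a) (\<mu> b)" if "x \<in> cone_interval S a b" for x a b
      using \<mu>_sector[of "x - a"] \<mu>_sector[of "b - x"] that
      by (simp add: cone_interval_def sector_interval_def linear_diff[OF \<open>linear \<mu>\<close>])
    have "\<omega> \<noteq> 0"
      using \<open>cmod \<omega> = 1\<close> by auto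
    then show "L (x, y) = f x0 / \<omega> * (\<mu> x + \<i> * \<mu> y)" for x y
      using cplx_cone_dual_split[OF L, of x y] \<open>f x0 \<noteq> 0\<close> by (simp add: \<mu>_def f_def field_simps)
  qed
qed

lemma cplx_cone_dual_ratio_bounds:
  assumes L: "L \<in> cplx_cone_dual S" and x0: "x0 \<in> real_cone S" and "1 \<le> \<rho>"
    and "0 < t1" "0 < s1" "x1 \<in> cone_interval S (t1 *\<^sub>R x0) ((\<rho> * t1) *\<^sub>R x0)"
      "y1 \<in> cone_interval S (s1 *\<^sub>R x0) ((\<rho> * s1) *\<^sub>R x0)"
    and "0 < t2" "0 < s2" "x2 \<in> cone_interval S (t2 *\<^sub>R x0) ((\<rho> * t2) *\<^sub>R x0)"
      "y2 \<in> cone_interval S (s2 *\<^sub>R x0) ((\<rho> * s2) *\<^sub>R x0)"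
  defines "k \<equiv> 3 * sqrt 2 * \<rho>\<^sup>2"
  shows "(t1 + s1) / (t2 + s2) / k \<le> cmod (L (x1, y1) / L (x2, y2))"
    and "cmod (L (x1, y1) / L (x2, y2)) \<le> k * ((t1 + s1) / (t2 + s2))"
proof -
  obtain \<nu> \<mu> where "\<nu> \<noteq> 0" "linear \<mu>" and \<omega>: "\<mu> x0 \<in> quarter_sector" "cmod (\<mu> x0) = 1"
    and interval: "\<And>x a b. x \<in> cone_interval S a b \<Longrightarrow> \<mu> x \<in> sector_interval (\<mu> a) (\<mu> b)"
    and L_eq: "\<And>x y. L (x, y) = \<nu> * (\<mu> x + \<i> * \<mu> y)"
    by (rule cplx_cone_dual_normal_form[OF L x0]) blast
  have bounds: "(t + s) / (3 * sqrt 2 * \<rho>) \<le> cmod (\<mu> x + \<i> * \<mu> y)"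
    "cmod (\<mu> x + \<i> * \<mu> y) \<le> \<rho> * (t + s)"
    if "0 < t" "0 < s" "x \<in> cone_interval S (t *\<^sub>R x0) ((\<rho> * t) *\<^sub>R x0)"
      "y \<in> cone_interval S (s *\<^sub>R x0) ((\<rho> * s) *\<^sub>R x0)" for x y t s
  proof -
    have "\<mu> x \<in> sector_interval (t *\<^sub>R \<mu> x0) ((\<rho> * t) *\<^sub>R \<mu> x0)"
      "\<mu> y \<in> sector_interval (s *\<^sub>R \<mu> x0) ((\<rho> * s) *\<^sub>R \<mu> x0)"
      using interval[OF that(3)] interval[OF that(4)] by (simp_all only: linear_cmul[OF \<open>linear \<mu>\<close>])
    then show "(t + s) / (3 * sqrt 2 * \<rho>) \<le> cmod (\<mu> x + \<i> * \<mu> y)"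
      "cmod (\<mu> x + \<i> * \<mu> y) \<le> \<rho> * (t + s)"
      using that(1,2) \<omega> \<open>1 \<le> \<rho>\<close>
      by (auto intro!: norm_lower_bound_in_quarter_sector norm_upper_bound_in_quarter_sector)
  qed
  have quotient: "cmod (L (x1, y1) / L (x2, y2)) = cmod (\<mu> x1 + \<i> * \<mu> y1) / cmod (\<mu> x2 + \<i> * \<mu> y2)"
    using \<open>\<nu> \<noteq> 0\<close> by (simp add: L_eq norm_mult norm_divide)
  have pos: "0 < (t1 + s1) / (3 * sqrt 2 * \<rho>)" "0 < (t2 + s2) / (3 * sqrt 2 * \<rho>)"
    using assms(4,5,8,9) \<open>1 \<le> \<rho>\<close> by simp_all
  have "(t1 + s1) / (t2 + s2) / k = (t1 + s1) / (3 * sqrt 2 * \<rho>) / (\<rho> * (t2 + s2))"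
    using \<open>1 \<le> \<rho>\<close> by (simp add: k_def power2_eq_square field_simps)
  also have "\<dots> \<le> cmod (L (x1, y1) / L (x2, y2))"
    unfolding quotient using pos(1) bounds[OF \<open>0 < t1\<close> \<open>0 < s1\<close> assms(6,7)]
      pos(2) bounds[OF \<open>0 < t2\<close> \<open>0 < s2\<close> assms(10,11)]
    by (rule quotient_bounds(1))
  finally show "(t1 + s1) / (t2 + s2) / k \<le> cmod (L (x1, y1) / L (x2, y2))" .
  have "cmod (L (x1, y1) / L (x2, y2)) \<le> \<rho> * (t1 + s1) / ((t2 + s2) / (3 * sqrt 2 * \<rho>))"
    unfolding quotient using pos(1) bounds[OF \<open>0 < t1\<close> \<open>0 < s1\<close> assms(6,7)]
      pos(2) bounds[OF \<open>0 < t2\<close> \<open>0 < s2\<close> assms(10,11)]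
    by (rule quotient_bounds(2))
  also have "\<dots> = k * ((t1 + s1) / (t2 + s2))"
    using \<open>1 \<le> \<rho>\<close> by (simp add: k_def power2_eq_square field_simps)
  finally show "cmod (L (x1, y1) / L (x2, y2)) \<le> k * ((t1 + s1) / (t2 + s2))" .
qed

lemma cone_gauge_cmul_le:
  assumes "P \<subseteq> real_cone S" "x0 \<in> P"
    and dist: "\<And>x. x \<in> P \<Longrightarrow> hilbert_dist S x0 x \<le> ereal \<Delta>" and "exp \<Delta> < \<rho>"
    and h: "z \<noteq> 0" "x1 \<in> P" "y1 \<in> P" and g: "z' \<noteq> 0" "x2 \<in> P" "y2 \<in> P"
  shows "cone_gauge S (cmul z (x1, y1)) (cmul z' (x2, y2)) \<le> ereal (2 * ln (3 * sqrt 2 * \<rho>\<^sup>2))"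
proof -
  have x0: "x0 \<in> real_cone S"
    using assms(1,2) by blast
  have "0 \<le> \<Delta>"
    using order_trans[OF hilbert_dist_nonneg[OF x0 x0] dist[OF \<open>x0 \<in> P\<close>]] by simp
  then have "1 \<le> \<rho>"
    using \<open>exp \<Delta> < \<rho>\<close> one_le_exp_iff[of \<Delta>] by linarith
  obtain T where T: "\<And>x. x \<in> P \<Longrightarrow> 0 < T x"
    "\<And>x. x \<in> P \<Longrightarrow> x \<in> cone_interval S (T x *\<^sub>R x0) ((\<rho> * T x) *\<^sub>R x0)"
    using hilbert_ball_sandwich[OF assms(1) x0 dist \<open>exp \<Delta> < \<rho>\<close>] by blast
  define k where "k = 3 * sqrt 2 * \<rho>\<^sup>2"
  define N where "N = (T x1 + T y1) / (T x2 + T y2)"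
  define c where "c = cmod z / cmod z'"
  have "0 < k" "0 < N" "0 < c"
    using T h g \<open>1 \<le> \<rho>\<close> by (simp_all add: k_def N_def c_def add_pos_pos)
  have "c * (N / k) \<le> cmod w \<and> cmod w \<le> c * (k * N)"
    if w: "w \<in> E_set S (cmul z (x1, y1)) (cmul z' (x2, y2))" for w
  proof -
    obtain L where L: "L \<in> cplx_cone_dual S"
      and "w = L (cmul z (x1, y1)) / L (cmul z' (x2, y2))"
      using w by (auto simp: E_set_def)
    then have "cmod w = c * cmod (L (x1, y1) / L (x2, y2))"
      by (simp add: c_def cplx_cone_dual_cmul norm_mult norm_divide)
    moreover have "N / k \<le> cmod (L (x1, y1) / L (x2, y2))" "cmod (L (x1, y1) / L (x2, y2)) \<le> k * N"
      using cplx_cone_dual_ratio_bounds[OF L x0 \<open>1 \<le> \<rho>\<close>, of "T x1" "T y1" x1 y1 "T x2" "T y2" x2 y2]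
        T h g unfolding N_def k_def by auto
    ultimately show ?thesis
      using \<open>0 < c\<close> by (simp add: mult_left_mono del: times_divide_eq_right)
  qed
  then have "cone_gauge S (cmul z (x1, y1)) (cmul z' (x2, y2)) \<le> ereal (ln (c * (k * N) / (c * (N / k))))"
    unfolding cone_gauge_def using \<open>0 < k\<close> \<open>0 < N\<close> \<open>0 < c\<close> by (intro eln_SUP_minus_eln_INF_le) auto
  also have "ln (c * (k * N) / (c * (N / k))) = 2 * ln k"
    using \<open>0 < k\<close> \<open>0 < N\<close> \<open>0 < c\<close> by (simp add: ln_mult power2_eq_square)
  finally show ?thesis
    by (simp add: k_def)
qed

end

lemma cone_setting_strictly_positive_functional:
  assumes "cone_setting V S e m \<kappa>"
  shows "strictly_positive_functional S m"
proof (rule strictly_positive_functional.intro)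
  show "l \<in> S \<Longrightarrow> linear l" for l
    using assms by (simp add: cone_setting_def bounded_linear.linear)
  show "linear m"
    using assms by (simp add: cone_setting_def bounded_linear.linear)
  show "0 < m h" if "h \<in> real_cone S" for h
  proof -
    have "0 < \<kappa> * norm h"
      using assms that by (simp add: cone_setting_def real_cone_def)
    also have "\<dots> \<le> m h"
      using assms that by (simp add: cone_setting_def)
    finally show ?thesis .
  qed
qed

theorem lemma5p16:
  fixes V1 :: "'a::banach set" and S1 :: "('a \<Rightarrow> real) set" and e1 :: 'a and m1 :: "'a \<Rightarrow> real"
    and V2 :: "'b::banach set" and S2 :: "('b \<Rightarrow> real) set" and e2 :: 'b and m2 :: "'b \<Rightarrow> real"
    and \<kappa> :: real and A :: "'a \<Rightarrow> 'b" and \<Delta>R :: real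
  assumes "cone_setting V1 S1 e1 m1 \<kappa>"
    and "cone_setting V2 S2 e2 m2 \<kappa>"
    and "bounded_linear A"
    and "A ` real_cone S1 \<subseteq> real_cone S2"
    and "ereal \<Delta>R = ediam (hilbert_dist S2) (A ` real_cone S1)"
  shows "ediam (cone_gauge S2) (cext A ` cplx_cone S1)
           \<le> ereal (8 * \<Delta>R + 2 * ln (3 * sqrt 2 / \<kappa>\<^sup>2))"
proof (rule ediam_le)
  interpret strictly_positive_functional S2 m2
    using assms(2) by (rule cone_setting_strictly_positive_functional)
  have "0 < \<kappa>" "\<kappa> < 1"
    using assms(2) by (simp_all add: cone_setting_def)
  then have "exp \<Delta>R < exp \<Delta>R / \<kappa>"
    by (simp add: field_simps)
  define P where "P = A ` real_cone S1"
  have "P \<subseteq> real_cone S2"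
    using assms(4) by (simp add: P_def)
  have dist: "hilbert_dist S2 x0 x \<le> ereal \<Delta>R" if "x0 \<in> P" "x \<in> P" for x0 x
    using le_ediam[OF that] assms(5) by (simp add: P_def)
  fix h g assume "h \<in> cext A ` cplx_cone S1" "g \<in> cext A ` cplx_cone S1"
  moreover have "linear A"
    using assms(3) by (rule bounded_linear.linear)
  ultimately obtain z x1 y1 z' x2 y2 where h: "h = cmul z (A x1, A y1)" "z \<noteq> 0"
    and g: "g = cmul z' (A x2, A y2)" "z' \<noteq> 0"
    and "x1 \<in> real_cone S1" "y1 \<in> real_cone S1" "x2 \<in> real_cone S1" "y2 \<in> real_cone S1"
    by (metis cext_cplx_coneE)
  then have P: "A x1 \<in> P" "A y1 \<in> P" "A x2 \<in> P" "A y2 \<in> P"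
    by (simp_all add: P_def)
  have "0 \<le> \<Delta>R"
    using order_trans[OF hilbert_dist_nonneg dist[OF P(1) P(1)]] \<open>P \<subseteq> _\<close> P(1) by auto
  have "cone_gauge S2 h g \<le> ereal (2 * ln (3 * sqrt 2 * (exp \<Delta>R / \<kappa>)\<^sup>2))"
    unfolding h(1) g(1) using \<open>P \<subseteq> _\<close> P(1) dist[OF P(1)] \<open>exp \<Delta>R < _\<close> h(2) P(1,2) g(2) P(3,4)
    by (rule cone_gauge_cmul_le)
  also have "\<dots> \<le> ereal (8 * \<Delta>R + 2 * ln (3 * sqrt 2 / \<kappa>\<^sup>2))"
    using ln_gauge_constant_le[OF \<open>0 \<le> \<Delta>R\<close> \<open>0 < \<kappa>\<close>] by simp
  finally show "cone_gauge S2 h g \<le> ereal (8 * \<Delta>R + 2 * ln (3 * sqrt 2 / \<kappa>\<^sup>2))" .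
qed

end
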